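(* For $x\in(0,1)$ let $$F(x)=\frac{B(1/2+x,3/2-x)}{x(1-x)}+R(1/2+x,3/2-x)-R(x,1-x),$$ and for $b>0$ let $$f_b(x)=\Big(\frac1x+\frac1b\Big)B(1/2+x,1/2+b)+R(1/2+x,1/2+b)-R(x,b).$$ (1) $F$ is strictly completely monotonic on $(0,1/2)$ and absolutely monotonic on $(1/2,1)$, and $4-4\log2\leq F(x)$ for all $x\in(0,1)$, with equality if and only if $x=1/2$. (2) For every $b\in(0,1)$, $f_b$ is strictly completely monotonic on $(0,1-b)$.
   Context: $B(x,y)=\Gamma(x)\Gamma(y)/\Gamma(x+y)$, $\psi=\Gamma'/\Gamma$, $\gamma=-\psi(1)$, $R(a,b)=-2\gamma-\psi(a)-\psi(b)$. A function $f$ on an interval $I$ is strictly completely monotonic if $(-1)^nf^{(n)}(x)>0$ for all $n\geq0$, $x\in I$; absolutely monotonic if $f^{(n)}(x)\geq0$ for all $n\ge0$, $x\in I$. *)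

theory Defs
  imports "HOL-Analysis.Analysis"
begin

definition R :: "real \<Rightarrow> real \<Rightarrow> real" where
  "R a b = - 2 * euler_mascheroni - Digamma a - Digamma b"

definition F :: "real \<Rightarrow> real" where
  "F x = Beta (1/2 + x) (3/2 - x) / (x * (1 - x)) + R (1/2 + x) (3/2 - x) - R x (1 - x)"

definition fb :: "real \<Rightarrow> real \<Rightarrow> real" where
  "fb b x = (1/x + 1/b) * Beta (1/2 + x) (1/2 + b) + R (1/2 + x) (1/2 + b) - R x b"

definition strictly_completely_monotonic_on :: "real set \<Rightarrow> (real \<Rightarrow> real) \<Rightarrow> bool" where
  "strictly_completely_monotonic_on I f \<longleftrightarrow>
     (\<forall>n. \<forall>x\<in>I. ((deriv ^^ n) f has_real_derivative (deriv ^^ Suc n) f x) (at x)) \<and>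
     (\<forall>n. \<forall>x\<in>I. (-1) ^ n * (deriv ^^ n) f x > 0)"

definition absolutely_monotonic_on :: "real set \<Rightarrow> (real \<Rightarrow> real) \<Rightarrow> bool" where
  "absolutely_monotonic_on I f \<longleftrightarrow>
     (\<forall>n. \<forall>x\<in>I. ((deriv ^^ n) f has_real_derivative (deriv ^^ Suc n) f x) (at x)) \<and>
     (\<forall>n. \<forall>x\<in>I. (deriv ^^ n) f x \<ge> 0)"

end

theory Submission
  imports Defs
begin

(* Both functions have the shape  w * q + p  with a Beta factor w, a rational factor q and a
   polygamma part p.  The logarithmic derivative U of w satisfies (-1)^m U^(m) <= 0, so by the
   Leibniz rule applied to w' = w U the factor w is completely monotonic, and w >= 1 by
   log-convexity of Gamma (B(a, 2 - a) >= 1) together with monotonicity of B.  The Leibniz rule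
   for w * q then gives (-1)^n (w q + p)^(n) >= (-1)^n (q^(n) + p^(n)), and the recurrence
   psi^(n)(z + 1) = psi^(n)(z) + (-1)^n n! / z^(n+1) turns the right-hand side into differences
   psi^(n)(z + 1) - psi^(n)(z + 1/2), whose signs follow from the complete monotonicity of psi'.
   Finally F(1 - x) = F(x): this turns complete monotonicity on (0, 1/2) into absolute
   monotonicity on (1/2, 1), and since F decreases on (0, 1/2] its minimum is
   F(1/2) = 4 - 4 log 2. *)

section \<open>Sequences of higher derivatives\<close>

definition higher_derivs_on :: "real set \<Rightarrow> (nat \<Rightarrow> real \<Rightarrow> real) \<Rightarrow> bool" where
  "higher_derivs_on S D \<longleftrightarrow> (\<forall>n. \<forall>x\<in>S. (D n has_real_derivative D (Suc n) x) (at x))"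

lemma higher_derivs_onD:
  "higher_derivs_on S D \<Longrightarrow> x \<in> S \<Longrightarrow> (D n has_real_derivative D (Suc n) x) (at x)"
  unfolding higher_derivs_on_def by blast

lemma higher_derivs_on_subset: "higher_derivs_on S D \<Longrightarrow> T \<subseteq> S \<Longrightarrow> higher_derivs_on T D"
  unfolding higher_derivs_on_def by blast

lemma higher_derivs_on_add:
  "higher_derivs_on S D \<Longrightarrow> higher_derivs_on S E \<Longrightarrow> higher_derivs_on S (\<lambda>n x. D n x + E n x)"
  unfolding higher_derivs_on_def by (auto intro!: derivative_eq_intros)

lemma higher_derivs_on_reflect:
  assumes "higher_derivs_on S D"
  shows "higher_derivs_on {x. c - x \<in> S} (\<lambda>n x. (-1) ^ n * D n (c - x))"
  unfolding higher_derivs_on_def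
proof safe
  fix n x assume "c - x \<in> S"
  have "((\<lambda>x. D n (c - x)) has_real_derivative D (Suc n) (c - x) * (0 - 1)) (at x)"
    by (rule DERIV_chain2[where g = "\<lambda>x. c - x", OF higher_derivs_onD[OF assms \<open>c - x \<in> S\<close>]])
      (rule derivative_intros)+
  from DERIV_cmult[OF this, of "(-1) ^ n"]
  show "((\<lambda>x. (-1) ^ n * D n (c - x)) has_real_derivative (-1) ^ Suc n * D (Suc n) (c - x)) (at x)"
    by simp
qed

lemma higher_derivs_on_deriv_funpow_eq:
  assumes "open S" "higher_derivs_on S D" "\<forall>x\<in>S. f x = D 0 x" "x \<in> S"
  shows "(deriv ^^ n) f x = D n x"
  using assms(4)
proof (induction n arbitrary: x)
  case 0
  then show ?case using assms(3) by simp
next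
  case (Suc n)
  have "eventually (\<lambda>y. (deriv ^^ n) f y = D n y) (nhds x)"
    using eventually_nhds_in_open[OF assms(1) Suc.prems] by (rule eventually_mono) (rule Suc.IH)
  then have "deriv ((deriv ^^ n) f) x = deriv (D n) x"
    by (rule deriv_cong_ev) simp
  also have "\<dots> = D (Suc n) x"
    by (rule DERIV_imp_deriv) (rule higher_derivs_onD[OF assms(2) Suc.prems])
  finally show ?case by simp
qed

lemma higher_derivs_on_deriv_funpow:
  assumes "open S" "higher_derivs_on S D" "\<forall>x\<in>S. f x = D 0 x"
  shows "higher_derivs_on S (\<lambda>n. (deriv ^^ n) f)"
  unfolding higher_derivs_on_def
proof safe
  fix n x assume "x \<in> S"
  note eq = higher_derivs_on_deriv_funpow_eq[OF assms]
  have "((deriv ^^ n) f has_real_derivative D (Suc n) x) (at x)"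
    by (rule has_field_derivative_transform_within_open[OF higher_derivs_onD[OF assms(2)] assms(1)])
      (use \<open>x \<in> S\<close> eq in auto)
  then show "((deriv ^^ n) f has_real_derivative (deriv ^^ Suc n) f x) (at x)"
    by (simp only: eq[OF \<open>x \<in> S\<close>])
qed

lemma strictly_completely_monotonic_onI:
  assumes "open S" "I \<subseteq> S" "higher_derivs_on S D" "\<forall>x\<in>S. f x = D 0 x"
    and "\<And>n x. x \<in> I \<Longrightarrow> 0 < (-1) ^ n * D n x"
  shows "strictly_completely_monotonic_on I f"
  using higher_derivs_on_deriv_funpow[OF assms(1,3,4)] higher_derivs_on_deriv_funpow_eq[OF assms(1,3,4)]
    assms(2,5)
  unfolding strictly_completely_monotonic_on_def higher_derivs_on_def by (auto simp: subset_eq)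

lemma absolutely_monotonic_onI:
  assumes "open S" "I \<subseteq> S" "higher_derivs_on S D" "\<forall>x\<in>S. f x = D 0 x"
    and "\<And>n x. x \<in> I \<Longrightarrow> 0 \<le> D n x"
  shows "absolutely_monotonic_on I f"
  using higher_derivs_on_deriv_funpow[OF assms(1,3,4)] higher_derivs_on_deriv_funpow_eq[OF assms(1,3,4)]
    assms(2,5)
  unfolding absolutely_monotonic_on_def higher_derivs_on_def by (auto simp: subset_eq)

lemma higher_derivs_on_reflection_symmetric:
  assumes "open S" "higher_derivs_on S D" "\<forall>x\<in>S. c - x \<in> S" "\<forall>x\<in>S. D 0 (c - x) = D 0 x"
    and "x \<in> S"
  shows "D n (c - x) = (-1) ^ n * D n x"
proof -
  have "higher_derivs_on S (\<lambda>n x. (-1) ^ n * D n (c - x))"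
    using higher_derivs_on_subset[OF higher_derivs_on_reflect[OF assms(2)]] assms(3) by blast
  then have "(deriv ^^ n) (D 0) x = (-1) ^ n * D n (c - x)"
    using higher_derivs_on_deriv_funpow_eq[OF assms(1) _ _ assms(5)] assms(4) by simp
  moreover have "(deriv ^^ n) (D 0) x = D n x"
    using higher_derivs_on_deriv_funpow_eq[OF assms(1,2) _ assms(5)] by simp
  ultimately show ?thesis
    by (simp add: mult.assoc[symmetric] flip: power_mult_distrib)
qed

lemma higher_derivs_on_strict_antimono:
  assumes "higher_derivs_on S D" "{x..y} \<subseteq> S" "x < y" "\<forall>t\<in>{x<..<y}. D 1 t < 0"
  shows "D 0 y < D 0 x"
proof (rule DERIV_neg_imp_decreasing_open[OF \<open>x < y\<close>])
  fix t assume "x < t" "t < y"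
  then show "\<exists>d. (D 0 has_real_derivative d) (at t) \<and> d < 0"
    using higher_derivs_onD[OF assms(1), of t 0] assms(2,4) by (auto simp: subset_eq)
next
  show "continuous_on {x..y} (D 0)"
    using higher_derivs_onD[OF assms(1)] assms(2)
    by (intro DERIV_atLeastAtMost_imp_continuous_on) (meson atLeastAtMost_iff subsetD)
qed

section \<open>The Leibniz rule\<close>

definition leibniz_sum :: "(nat \<Rightarrow> real) \<Rightarrow> (nat \<Rightarrow> real) \<Rightarrow> nat \<Rightarrow> real" where
  "leibniz_sum a b n = (\<Sum>i=0..n. real (n choose i) * a i * b (n - i))"

lemma leibniz_sum_Suc:
  "leibniz_sum a b (Suc n) =
     (\<Sum>i=0..n. real (n choose i) * (a (Suc i) * b (n - i) + a i * b (Suc (n - i))))"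
proof -
  have "leibniz_sum a b (Suc n) =
        a 0 * b (Suc n) + (\<Sum>i=0..n. real (Suc n choose Suc i) * a (Suc i) * b (n - i))"
    unfolding leibniz_sum_def by (subst sum.atLeast0_atMost_Suc_shift) simp
  also have "\<dots> = (\<Sum>i=0..n. real (n choose i) * a (Suc i) * b (n - i)) +
        (a 0 * b (Suc n) + (\<Sum>i=0..n. real (n choose Suc i) * a (Suc i) * b (n - i)))"
    by (simp add: sum.distrib algebra_simps)
  also have "a 0 * b (Suc n) + (\<Sum>i=0..n. real (n choose Suc i) * a (Suc i) * b (n - i)) =
        (\<Sum>i=0..Suc n. real (n choose i) * a i * b (Suc n - i))"
    by (subst sum.atLeast0_atMost_Suc_shift) simp
  also have "\<dots> = (\<Sum>i=0..n. real (n choose i) * a i * b (Suc (n - i)))"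
    by (simp add: Suc_diff_le)
  finally show ?thesis
    by (simp add: sum.distrib algebra_simps)
qed

lemma leibniz_sum_has_real_derivative:
  assumes "\<And>i. i \<le> n \<Longrightarrow> (A i has_real_derivative A (Suc i) x) (at x)"
    and "\<And>i. i \<le> n \<Longrightarrow> (B i has_real_derivative B (Suc i) x) (at x)"
  shows "((\<lambda>y. leibniz_sum (\<lambda>i. A i y) (\<lambda>i. B i y) n) has_real_derivative
           leibniz_sum (\<lambda>i. A i x) (\<lambda>i. B i x) (Suc n)) (at x)"
  unfolding leibniz_sum_Suc unfolding leibniz_sum_def
proof (rule DERIV_sum)
  fix i assume "i \<in> {0..n}"
  then have "i \<le> n" by simp
  have "((\<lambda>y. A i y * B (n - i) y) has_real_derivative
          A (Suc i) x * B (n - i) x + A i x * B (Suc (n - i)) x) (at x)"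
    by (rule DERIV_cong[OF DERIV_mult[OF assms]]) (use \<open>i \<le> n\<close> in auto)
  from DERIV_cmult[OF this, of "real (n choose i)"]
  show "((\<lambda>y. real (n choose i) * A i y * B (n - i) y) has_real_derivative
          real (n choose i) * (A (Suc i) x * B (n - i) x + A i x * B (Suc (n - i)) x)) (at x)"
    by (simp add: mult.assoc)
qed

lemma higher_derivs_on_mult:
  "higher_derivs_on S A \<Longrightarrow> higher_derivs_on S B \<Longrightarrow>
     higher_derivs_on S (\<lambda>n x. leibniz_sum (\<lambda>i. A i x) (\<lambda>i. B i x) n)"
  unfolding higher_derivs_on_def by (blast intro: leibniz_sum_has_real_derivative)

lemma leibniz_sum_alternating:
  "(-1) ^ n * leibniz_sum a b n = leibniz_sum (\<lambda>i. (-1) ^ i * a i) (\<lambda>i. (-1) ^ i * b i) n"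
  unfolding leibniz_sum_def sum_distrib_left
proof (rule sum.cong[OF refl])
  fix i assume "i \<in> {0..n}"
  then have "(-1::real) ^ n = (-1) ^ i * (-1) ^ (n - i)"
    by (simp add: power_add[symmetric])
  then show "(-1) ^ n * (real (n choose i) * a i * b (n - i)) =
             real (n choose i) * ((-1) ^ i * a i) * ((-1) ^ (n - i) * b (n - i))"
    by simp
qed

lemma leibniz_sum_nonneg:
  "(\<And>i. i \<le> n \<Longrightarrow> 0 \<le> a i) \<Longrightarrow> (\<And>i. i \<le> n \<Longrightarrow> 0 \<le> b i) \<Longrightarrow> 0 \<le> leibniz_sum a b n"
  unfolding leibniz_sum_def by (intro sum_nonneg mult_nonneg_nonneg) auto

lemma leibniz_sum_ge_first:
  assumes "\<And>i. 0 \<le> a i" "\<And>i. 0 \<le> b i"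
  shows "a 0 * b n \<le> leibniz_sum a b n"
  unfolding leibniz_sum_def
  using member_le_sum[of 0 "{0..n}" "\<lambda>i. real (n choose i) * a i * b (n - i)"] assms by simp

text \<open>The derivatives of a function \<open>f\<close> with \<open>f' = f * U 0\<close>, computed by the Leibniz rule.\<close>

fun derivs_of_log_deriv :: "(real \<Rightarrow> real) \<Rightarrow> (nat \<Rightarrow> real \<Rightarrow> real) \<Rightarrow> nat \<Rightarrow> real \<Rightarrow> real" where
  "derivs_of_log_deriv f U 0 x = f x"
| "derivs_of_log_deriv f U (Suc n) x =
     (\<Sum>i=0..n. real (n choose i) * derivs_of_log_deriv f U i x * U (n - i) x)"

lemma derivs_of_log_deriv_Suc:
  "derivs_of_log_deriv f U (Suc n) x = leibniz_sum (\<lambda>i. derivs_of_log_deriv f U i x) (\<lambda>i. U i x) n"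
  by (simp add: leibniz_sum_def)

declare derivs_of_log_deriv.simps(2) [simp del]

lemma higher_derivs_on_derivs_of_log_deriv:
  assumes "higher_derivs_on S U" "\<And>x. x \<in> S \<Longrightarrow> (f has_real_derivative f x * U 0 x) (at x)"
  shows "higher_derivs_on S (derivs_of_log_deriv f U)"
  unfolding higher_derivs_on_def
proof (intro allI ballI)
  fix n x assume "x \<in> S"
  then show "(derivs_of_log_deriv f U n has_real_derivative derivs_of_log_deriv f U (Suc n) x) (at x)"
  proof (induction n arbitrary: x rule: less_induct)
    case (less n)
    show ?case
    proof (cases n)
      case 0
      then show ?thesis
        using assms(2)[OF less.prems] by (simp add: derivs_of_log_deriv_Suc leibniz_sum_def)
    next
      case (Suc m)
      have "((\<lambda>y. leibniz_sum (\<lambda>i. derivs_of_log_deriv f U i y) (\<lambda>i. U i y) m) has_real_derivative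
              leibniz_sum (\<lambda>i. derivs_of_log_deriv f U i x) (\<lambda>i. U i x) (Suc m)) (at x)"
        using less Suc higher_derivs_onD[OF assms(1) less.prems]
        by (intro leibniz_sum_has_real_derivative) auto
      then show ?thesis
        unfolding Suc derivs_of_log_deriv_Suc[abs_def] by simp
    qed
  qed
qed

lemma derivs_of_log_deriv_alternating_nonneg:
  assumes "0 \<le> f x" "\<And>m. (-1) ^ m * U m x \<le> 0"
  shows "0 \<le> (-1) ^ n * derivs_of_log_deriv f U n x"
proof (induction n rule: less_induct)
  case (less n)
  show ?case
  proof (cases n)
    case 0
    then show ?thesis using assms(1) by simp
  next
    case (Suc m)
    have "0 \<le> leibniz_sum (\<lambda>i. (-1) ^ i * derivs_of_log_deriv f U i x) (\<lambda>i. - ((-1) ^ i * U i x)) m"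
      using less Suc assms(2) by (intro leibniz_sum_nonneg) (auto simp: minus_le_iff)
    also have "\<dots> = - leibniz_sum (\<lambda>i. (-1) ^ i * derivs_of_log_deriv f U i x) (\<lambda>i. (-1) ^ i * U i x) m"
      by (simp add: leibniz_sum_def sum_negf)
    also have "\<dots> = (-1) ^ n * derivs_of_log_deriv f U n x"
      by (simp only: leibniz_sum_alternating[symmetric] Suc derivs_of_log_deriv_Suc) simp
    finally show ?thesis .
  qed
qed

lemma alternating_leibniz_sum_plus_pos:
  fixes a q :: "nat \<Rightarrow> real"
  assumes "\<And>i. 0 \<le> (-1) ^ i * a i" "1 \<le> a 0" "\<And>j. 0 \<le> (-1) ^ j * q j"
    and "0 < (-1) ^ n * (q n + p)"
  shows "0 < (-1) ^ n * (leibniz_sum a q n + p)"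
proof -
  have "(-1) ^ n * q n \<le> a 0 * ((-1) ^ n * q n)"
    using assms(2,3) mult_right_mono[of 1 "a 0"] by simp
  also have "\<dots> \<le> (-1) ^ n * leibniz_sum a q n"
    using leibniz_sum_ge_first[of "\<lambda>i. (-1) ^ i * a i" "\<lambda>j. (-1) ^ j * q j" n] assms(1,3)
    by (simp add: leibniz_sum_alternating)
  finally show ?thesis
    using assms(4) by (simp add: algebra_simps)
qed

section \<open>Gamma, Beta and polygamma functions\<close>

lemma pos_not_nonpos_Ints: "0 < (x::real) \<Longrightarrow> x \<notin> \<int>\<^sub>\<le>\<^sub>0"
  by (auto elim!: nonpos_Ints_cases)

lemma Beta_has_real_derivative:
  fixes f g :: "real \<Rightarrow> real"
  assumes f: "(f has_real_derivative f') (at x)" and g: "(g has_real_derivative g') (at x)"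
    and "0 < f x" "0 < g x"
  shows "((\<lambda>y. Beta (f y) (g y)) has_real_derivative
           Beta (f x) (g x) * (f' * Digamma (f x) + g' * Digamma (g x) - (f' + g') * Digamma (f x + g x)))
         (at x)"
proof -
  have "0 < f x + g x" using assms by simp
  note Gamma = has_field_derivative_Gamma[OF pos_not_nonpos_Ints]
    and rGamma = has_field_derivative_rGamma_no_nonpos_int[OF pos_not_nonpos_Ints]
  show ?thesis
    unfolding Beta_altdef
    by (rule DERIV_cong, (rule DERIV_mult DERIV_chain2[OF Gamma] DERIV_chain2[OF rGamma] DERIV_add
          f g assms \<open>0 < f x + g x\<close>)+)
      (simp add: algebra_simps)
qed

lemma one_le_Beta_two_minus:
  fixes a :: real
  assumes "0 < a" "a < 2"
  shows "1 \<le> Beta a (2 - a)"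
proof -
  have "(1 - 1/2) *\<^sub>R a + (1/2) *\<^sub>R (2 - a) = 1"
    by (simp add: field_simps)
  then have "ln (Gamma 1) \<le> (1 - 1/2) * ln (Gamma a) + 1/2 * ln (Gamma (2 - a))"
    using convex_onD[OF log_convex_Gamma_real, of "1/2" a "2 - a"] assms by simp
  then have "0 \<le> ln (Gamma a * Gamma (2 - a))"
    using assms by (simp add: ln_mult Gamma_real_pos)
  then show ?thesis
    using assms by (simp add: Beta_def Gamma_real_pos ln_ge_zero_iff Gamma_numeral)
qed

lemma Polygamma_real_alternating_strict_mono:
  fixes y z :: real
  assumes "0 < y" "y < z"
  shows "(-1) ^ n * Polygamma n y < (-1) ^ n * Polygamma n z"
  using Polygamma_real_strict_mono[OF assms] Polygamma_real_strict_antimono[OF assms]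
  by (cases "even n") auto

lemma Polygamma_real_odd_increment_strict_mono:
  fixes y z c :: real
  assumes "odd n" "0 < y" "y < z" "0 < c"
  shows "Polygamma n (y + c) - Polygamma n y < Polygamma n (z + c) - Polygamma n z"
proof (rule DERIV_pos_imp_increasing[OF \<open>y < z\<close>])
  fix w assume "y \<le> w" "w \<le> z"
  then have "0 < w" using assms by simp
  have "((\<lambda>w. Polygamma n (w + c) - Polygamma n w) has_real_derivative
          Polygamma (Suc n) (w + c) - Polygamma (Suc n) w) (at w)"
    using \<open>0 < w\<close> assms by (auto intro!: derivative_eq_intros pos_not_nonpos_Ints)
  moreover have "Polygamma (Suc n) w < Polygamma (Suc n) (w + c)"
    using \<open>0 < w\<close> assms by (intro Polygamma_real_strict_mono) auto
  ultimately show "\<exists>d. ((\<lambda>w. Polygamma n (w + c) - Polygamma n w) has_real_derivative d) (at w) \<and> 0 < d"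
    by auto
qed

lemma has_real_derivative_alternating_inverse_power:
  "x \<noteq> 0 \<Longrightarrow> ((\<lambda>x. (-1) ^ n * fact n / x ^ Suc n) has_real_derivative
     (-1) ^ Suc n * fact (Suc n) / x ^ Suc (Suc n)) (at x)"
  by (rule derivative_eq_intros refl | simp)+

lemma has_real_derivative_inverse_power_reflected:
  "x \<noteq> c \<Longrightarrow> ((\<lambda>x. fact n / (c - x) ^ Suc n) has_real_derivative
     fact (Suc n) / (c - x) ^ Suc (Suc n)) (at x)"
  by (rule derivative_eq_intros refl | simp)+

section \<open>The function \<open>F\<close>\<close>

text \<open>\<open>F = F_beta * (1/x + 1/(1 - x)) + F_psi 0\<close>; \<open>F_dlog\<close>, \<open>F_rat\<close> and \<open>F_psi\<close> are the
  derivatives of \<open>(ln F_beta)'\<close>, of the rational factor and of the polygamma part.\<close>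

definition F_beta :: "real \<Rightarrow> real" where
  "F_beta x = Beta (1/2 + x) (3/2 - x)"

definition F_dlog :: "nat \<Rightarrow> real \<Rightarrow> real" where
  "F_dlog n x = Polygamma n (1/2 + x) - (-1) ^ n * Polygamma n (3/2 - x)"

definition F_rat :: "nat \<Rightarrow> real \<Rightarrow> real" where
  "F_rat n x = (-1) ^ n * fact n / x ^ Suc n + fact n / (1 - x) ^ Suc n"

definition F_psi :: "nat \<Rightarrow> real \<Rightarrow> real" where
  "F_psi n x = Polygamma n x + (-1) ^ n * Polygamma n (1 - x)
     - Polygamma n (1/2 + x) - (-1) ^ n * Polygamma n (3/2 - x)"

definition F_derivs :: "nat \<Rightarrow> real \<Rightarrow> real" where
  "F_derivs n x =
     leibniz_sum (\<lambda>i. derivs_of_log_deriv F_beta F_dlog i x) (\<lambda>i. F_rat i x) n + F_psi n x"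

lemma higher_derivs_on_F_derivs: "higher_derivs_on {0<..<1} F_derivs"
proof -
  have "higher_derivs_on {0<..<1} F_dlog"
    unfolding higher_derivs_on_def F_dlog_def
    by (auto intro!: derivative_eq_intros pos_not_nonpos_Ints)
  moreover have "(F_beta has_real_derivative F_beta x * F_dlog 0 x) (at x)" if "x \<in> {0<..<1}" for x
    unfolding F_beta_def[abs_def]
    by (rule DERIV_cong[OF Beta_has_real_derivative[where f = "\<lambda>x. 1/2 + x" and g = "\<lambda>x. 3/2 - x"]])
      (use that in \<open>auto intro!: derivative_eq_intros simp: F_dlog_def F_beta_def\<close>)
  moreover have "higher_derivs_on {0<..<1} F_rat"
    unfolding higher_derivs_on_def F_rat_def
  proof (intro allI ballI)
    fix n x assume "x \<in> {0<..<(1::real)}"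
    then have "x \<noteq> 0" "x \<noteq> 1" by auto
    then show "((\<lambda>x. (-1) ^ n * fact n / x ^ Suc n + fact n / (1 - x) ^ Suc n) has_real_derivative
        (-1) ^ Suc n * fact (Suc n) / x ^ Suc (Suc n) + fact (Suc n) / (1 - x) ^ Suc (Suc n)) (at x)"
      by (intro DERIV_add has_real_derivative_alternating_inverse_power
          has_real_derivative_inverse_power_reflected)
  qed
  moreover have "higher_derivs_on {0<..<1} F_psi"
    unfolding higher_derivs_on_def F_psi_def
    by (auto intro!: derivative_eq_intros pos_not_nonpos_Ints)
  ultimately show ?thesis
    unfolding F_derivs_def[abs_def]
    by (intro higher_derivs_on_add higher_derivs_on_mult higher_derivs_on_derivs_of_log_deriv)
qed

lemma F_eq_F_derivs: "0 < x \<Longrightarrow> x < 1 \<Longrightarrow> F x = F_derivs 0 x"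
  by (simp add: F_def R_def F_derivs_def leibniz_sum_def F_beta_def F_rat_def F_psi_def field_simps)

lemma F_reflect: "F (1 - x) = F x"
proof -
  have "1/2 + (1 - x) = 3/2 - x" "3/2 - (1 - x) = 1/2 + x" "1 - (1 - x) = x"
    by simp_all
  then show ?thesis
    by (simp add: F_def R_def Beta_commute algebra_simps)
qed

lemma F_half: "F (1/2) = 4 - 4 * ln 2"
  by (simp add: F_def R_def Beta_def Gamma_numeral Digamma_one_half)

lemma F_dlog_alternating_nonpos:
  assumes "0 < x" "x < 1/2"
  shows "(-1) ^ m * F_dlog m x \<le> 0"
proof (cases "even m")
  case True
  then have "Polygamma m (1/2 + x) \<le> Polygamma m (3/2 - x)"
    using assms by (intro Polygamma_real_mono) auto
  then show ?thesis using True by (simp add: F_dlog_def)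
next
  case False
  then have "0 < Polygamma m (1/2 + x)" "0 < Polygamma m (3/2 - x)"
    using assms by (auto intro!: Polygamma_real_odd_pos pos_not_nonpos_Ints)
  then show ?thesis using False by (simp add: F_dlog_def)
qed

lemma F_rat_alternating_nonneg:
  assumes "0 < x" "x \<le> 1/2"
  shows "0 \<le> (-1) ^ n * F_rat n x"
proof -
  have "fact n / (1 - x) ^ Suc n \<le> fact n / x ^ Suc n"
    using assms by (intro divide_left_mono power_mono mult_pos_pos) auto
  moreover have "0 \<le> fact n / (1 - x) ^ Suc n"
    using assms by simp
  ultimately show ?thesis
    by (cases "even n") (simp_all add: F_rat_def)
qed

lemma F_beta_ge_1: "0 < x \<Longrightarrow> x < 1 \<Longrightarrow> 1 \<le> F_beta x"
  using one_le_Beta_two_minus[of "1/2 + x"] by (simp add: F_beta_def)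

lemma F_rat_psi_alternating_pos:
  assumes "0 < x" "x < 1/2"
  shows "0 < (-1) ^ n * (F_rat n x + F_psi n x)"
proof -
  define s :: real where "s = (-1) ^ n"
  have ss: "s * (s * a) = a" for a
    by (simp add: s_def mult.assoc[symmetric] flip: power_mult_distrib)
  \<comment> \<open>the recurrence for \<open>Polygamma n (z + 1)\<close> absorbs the rational part\<close>
  define \<Delta> where "\<Delta> w = Polygamma n (w + 1) - Polygamma n (w + 1/2)" for w :: real
  have "Polygamma n (x + 1) = Polygamma n x + s * (fact n / x ^ Suc n)"
    "Polygamma n ((1 - x) + 1) = Polygamma n (1 - x) + s * (fact n / (1 - x) ^ Suc n)"
    using assms Polygamma_plus1[of x n] Polygamma_plus1[of "1 - x" n] by (simp_all add: s_def)
  then have "(-1) ^ n * (F_rat n x + F_psi n x) = s * \<Delta> x + \<Delta> (1 - x)"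
    unfolding F_rat_def F_psi_def \<Delta>_def s_def[symmetric]
    by (simp add: algebra_simps ss)
  also have "0 < s * \<Delta> x + \<Delta> (1 - x)"
  proof (cases "even n")
    case True
    then have "s = 1" by (simp add: s_def)
    have "0 < \<Delta> w" if "0 < w" for w
      using Polygamma_real_strict_mono[of "w + 1/2" "w + 1" n] that True by (simp add: \<Delta>_def)
    then show ?thesis using assms \<open>s = 1\<close> by (simp add: add_pos_pos)
  next
    case False
    then have "s = -1" by (simp add: s_def)
    have "\<Delta> x < \<Delta> (1 - x)"
      using Polygamma_real_odd_increment_strict_mono[OF False, of "x + 1/2" "3/2 - x" "1/2"] assms
      by (simp add: \<Delta>_def add_ac)
    then show ?thesis using \<open>s = -1\<close> by simp
  qed
  finally show ?thesis .
qed

lemma F_derivs_alternating_pos: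
  assumes "0 < x" "x < 1/2"
  shows "0 < (-1) ^ n * F_derivs n x"
  unfolding F_derivs_def
proof (rule alternating_leibniz_sum_plus_pos)
  show "0 \<le> (-1) ^ i * derivs_of_log_deriv F_beta F_dlog i x" for i
    using assms F_beta_ge_1[of x] F_dlog_alternating_nonpos[OF assms]
    by (intro derivs_of_log_deriv_alternating_nonneg) auto
qed (use assms F_beta_ge_1 F_rat_alternating_nonneg F_rat_psi_alternating_pos in auto)

lemma F_derivs_reflect: "0 < x \<Longrightarrow> x < 1 \<Longrightarrow> F_derivs n (1 - x) = (-1) ^ n * F_derivs n x"
proof (intro higher_derivs_on_reflection_symmetric[OF _ higher_derivs_on_F_derivs] ballI)
  fix y :: real assume "y \<in> {0<..<1}"
  then show "F_derivs 0 (1 - y) = F_derivs 0 y"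
    using F_eq_F_derivs[of y] F_eq_F_derivs[of "1 - y"] F_reflect[of y] by simp
qed auto

lemma F_gt_F_half:
  assumes "0 < x" "x < 1" "x \<noteq> 1/2"
  shows "F (1/2) < F x"
proof -
  have *: "F (1/2) < F y" if "0 < y" "y < 1/2" for y
  proof -
    have "F_derivs 0 (1/2) < F_derivs 0 y"
      using that F_derivs_alternating_pos[of _ 1]
      by (intro higher_derivs_on_strict_antimono[OF higher_derivs_on_F_derivs]) auto
    then show ?thesis
      using that by (simp add: F_eq_F_derivs)
  qed
  show ?thesis
  proof (cases "x < 1/2")
    case True
    then show ?thesis using * assms by simp
  next
    case False
    then show ?thesis using *[of "1 - x"] assms F_reflect[of x] by simp
  qed
qed

section \<open>The functions \<open>f\<^sub>b\<close>\<close>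

definition fb_beta :: "real \<Rightarrow> real \<Rightarrow> real" where
  "fb_beta b x = Beta (1/2 + x) (1/2 + b)"

definition fb_dlog :: "real \<Rightarrow> nat \<Rightarrow> real \<Rightarrow> real" where
  "fb_dlog b n x = Polygamma n (1/2 + x) - Polygamma n (1 + b + x)"

definition fb_rat :: "real \<Rightarrow> nat \<Rightarrow> real \<Rightarrow> real" where
  "fb_rat b n x = (-1) ^ n * fact n / x ^ Suc n + (if n = 0 then 1 / b else 0)"

definition fb_psi :: "real \<Rightarrow> nat \<Rightarrow> real \<Rightarrow> real" where
  "fb_psi b n x = Polygamma n x - Polygamma n (1/2 + x)
     + (if n = 0 then Digamma b - Digamma (1/2 + b) else 0)"

definition fb_derivs :: "real \<Rightarrow> nat \<Rightarrow> real \<Rightarrow> real" where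
  "fb_derivs b n x =
     leibniz_sum (\<lambda>i. derivs_of_log_deriv (fb_beta b) (fb_dlog b) i x) (\<lambda>i. fb_rat b i x) n
     + fb_psi b n x"

lemma higher_derivs_on_fb_derivs:
  assumes "0 < b"
  shows "higher_derivs_on {0<..} (fb_derivs b)"
proof -
  have "higher_derivs_on {0<..} (fb_dlog b)"
    unfolding higher_derivs_on_def fb_dlog_def
    using assms by (auto intro!: derivative_eq_intros pos_not_nonpos_Ints)
  moreover have "(fb_beta b has_real_derivative fb_beta b x * fb_dlog b 0 x) (at x)" if "0 < x" for x
    unfolding fb_beta_def[abs_def]
    by (rule DERIV_cong[OF Beta_has_real_derivative[where f = "\<lambda>x. 1/2 + x" and g = "\<lambda>x. 1/2 + b"]])
      (use that assms in \<open>auto intro!: derivative_eq_intros simp: fb_dlog_def fb_beta_def add_ac\<close>)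
  moreover have "higher_derivs_on {0<..} (fb_rat b)"
    unfolding higher_derivs_on_def fb_rat_def
  proof (intro allI ballI)
    fix n and x :: real assume "x \<in> {0<..}"
    have "((\<lambda>x. if n = 0 then 1 / b else 0) has_real_derivative (if Suc n = 0 then 1 / b else 0)) (at x)"
      by (simp add: DERIV_const)
    with \<open>x \<in> {0<..}\<close> show "((\<lambda>x. (-1) ^ n * fact n / x ^ Suc n + (if n = 0 then 1 / b else 0))
        has_real_derivative (-1) ^ Suc n * fact (Suc n) / x ^ Suc (Suc n) + (if Suc n = 0 then 1 / b else 0))
        (at x)"
      by (intro DERIV_add has_real_derivative_alternating_inverse_power) auto
  qed
  moreover have "higher_derivs_on {0<..} (fb_psi b)"
    unfolding higher_derivs_on_def fb_psi_def
    by (auto intro!: derivative_eq_intros pos_not_nonpos_Ints)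
  ultimately show ?thesis
    unfolding fb_derivs_def[abs_def]
    by (intro higher_derivs_on_add higher_derivs_on_mult higher_derivs_on_derivs_of_log_deriv) auto
qed

lemma fb_eq_fb_derivs: "0 < x \<Longrightarrow> fb b x = fb_derivs b 0 x"
  by (simp add: fb_def R_def fb_derivs_def leibniz_sum_def fb_beta_def fb_rat_def fb_psi_def
      algebra_simps)

lemma fb_dlog_alternating_nonpos:
  "0 < b \<Longrightarrow> 0 < x \<Longrightarrow> (-1) ^ m * fb_dlog b m x \<le> 0"
  using Polygamma_real_alternating_strict_mono[of "1/2 + x" "1 + b + x" m]
  by (simp add: fb_dlog_def algebra_simps)

lemma fb_rat_alternating_nonneg: "0 < b \<Longrightarrow> 0 < x \<Longrightarrow> 0 \<le> (-1) ^ n * fb_rat b n x"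
  by (simp add: fb_rat_def mult.assoc[symmetric] flip: power_mult_distrib)

lemma fb_beta_ge_1:
  assumes "0 < b" "0 < x" "x < 1 - b"
  shows "1 \<le> fb_beta b x"
proof -
  have "1 \<le> Beta (1/2 + x) (2 - (1/2 + x))"
    using assms by (intro one_le_Beta_two_minus) auto
  also have "\<dots> \<le> Beta (1/2 + x) (1/2 + b)"
    using assms by (intro Beta_real_mono) auto
  finally show ?thesis
    by (simp add: fb_beta_def)
qed

lemma fb_rat_psi_alternating_pos:
  assumes "0 < b" "0 < x"
  shows "0 < (-1) ^ n * (fb_rat b n x + fb_psi b n x)"
proof -
  define \<Delta> where "\<Delta> w = (-1) ^ n * (Polygamma n (w + 1) - Polygamma n (w + 1/2))" for w :: real
  have pos: "0 < \<Delta> w" if "0 < w" for w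
    using Polygamma_real_alternating_strict_mono[of "w + 1/2" "w + 1" n] that
    by (simp add: \<Delta>_def algebra_simps)
  have "Polygamma n (x + 1) = Polygamma n x + (-1) ^ n * fact n / x ^ Suc n"
    "Digamma (b + 1) = Digamma b + 1 / b"
    using assms Polygamma_plus1[of x n] Polygamma_plus1[of b 0] by simp_all
  then have "(-1) ^ n * (fb_rat b n x + fb_psi b n x) = \<Delta> x + (if n = 0 then \<Delta> b else 0)"
    by (simp add: fb_rat_def fb_psi_def \<Delta>_def algebra_simps mult.assoc[symmetric] flip: power_mult_distrib)
  then show ?thesis
    using pos[of x] pos[of b] assms by simp
qed

lemma fb_derivs_alternating_pos:
  assumes "0 < b" "0 < x" "x < 1 - b"
  shows "0 < (-1) ^ n * fb_derivs b n x"
  unfolding fb_derivs_def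
proof (rule alternating_leibniz_sum_plus_pos)
  show "0 \<le> (-1) ^ i * derivs_of_log_deriv (fb_beta b) (fb_dlog b) i x" for i
    using assms fb_beta_ge_1[OF assms] fb_dlog_alternating_nonpos[OF assms(1,2)]
    by (intro derivs_of_log_deriv_alternating_nonneg) auto
qed (use assms fb_beta_ge_1 fb_rat_alternating_nonneg fb_rat_psi_alternating_pos in auto)

theorem proposition2:
  shows "strictly_completely_monotonic_on {0<..<1/2} F \<and>
         absolutely_monotonic_on {1/2<..<1} F \<and>
         (\<forall>x\<in>{0<..<1}. 4 - 4 * ln 2 \<le> F x) \<and>
         (\<forall>x\<in>{0<..<1}. F x = 4 - 4 * ln 2 \<longleftrightarrow> x = 1/2) \<and>
         (\<forall>b\<in>{0<..<1}. strictly_completely_monotonic_on {0<..<1-b} (fb b))"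
proof (intro conjI ballI)
  show "strictly_completely_monotonic_on {0<..<1/2} F"
    using F_eq_F_derivs F_derivs_alternating_pos
    by (intro strictly_completely_monotonic_onI[OF _ _ higher_derivs_on_F_derivs]) auto
  show "absolutely_monotonic_on {1/2<..<1} F"
  proof (intro absolutely_monotonic_onI[OF _ _ higher_derivs_on_F_derivs])
    fix n and x :: real assume "x \<in> {1/2<..<1}"
    then show "0 \<le> F_derivs n x"
      using F_derivs_reflect[of "1 - x" n] F_derivs_alternating_pos[of "1 - x" n] by simp
  qed (use F_eq_F_derivs in auto)
  fix x :: real assume "x \<in> {0<..<1}"
  then show "4 - 4 * ln 2 \<le> F x" "F x = 4 - 4 * ln 2 \<longleftrightarrow> x = 1/2"
    using F_gt_F_half[of x] F_half by (cases "x = 1/2"; force)+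
next
  fix b :: real assume "b \<in> {0<..<1}"
  then show "strictly_completely_monotonic_on {0<..<1-b} (fb b)"
    using fb_eq_fb_derivs fb_derivs_alternating_pos[of b]
    by (intro strictly_completely_monotonic_onI[OF _ _ higher_derivs_on_fb_derivs]) auto
qed

end
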